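(* Define real algebras $A_i$, $i\ge 0$, by $A_0=\mathbb{R}$ with $\bar a=a$, and $A_{i+1}=A_i\oplus A_i$ with multiplication $(a,b)(c,d)=(ac-d\bar b,\ \bar a d+cb)$ and involution $\overline{(a,b)}=(\bar a,-b)$. Then every $A_i$, $i\ge0$, is von-Neumann finite and reversible.
   Context: An algebra $A$ (unital, not necessarily associative) is von-Neumann finite if $ab=1$ implies $ba=1$ for all $a,b\in A$, and reversible if $ab=0$ implies $ba=0$ for all $a,b\in A$. *)

theory Defs
  imports Main "HOL.Real"
begin

text \<open>An element of A_n is represented
as a real list of length 2^n; for n+1 the first half is the component a and the
second half the component b of the pair (a,b) in A_n + A_n.\<close>

definition cd_carrier :: "nat \<Rightarrow> real list set" where
  "cd_carrier n = {x. length x = 2 ^ n}"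

definition cd_add :: "real list \<Rightarrow> real list \<Rightarrow> real list" where
  "cd_add x y = map2 (+) x y"

definition cd_sub :: "real list \<Rightarrow> real list \<Rightarrow> real list" where
  "cd_sub x y = map2 (-) x y"

fun cd_conj :: "nat \<Rightarrow> real list \<Rightarrow> real list" where
  "cd_conj 0 x = x"
| "cd_conj (Suc n) x = cd_conj n (take (2 ^ n) x) @ map uminus (drop (2 ^ n) x)"

fun cd_mul :: "nat \<Rightarrow> real list \<Rightarrow> real list \<Rightarrow> real list" where
  "cd_mul 0 x y = [hd x * hd y]"
| "cd_mul (Suc n) x y =
     (let a = take (2 ^ n) x; b = drop (2 ^ n) x;
          c = take (2 ^ n) y; d = drop (2 ^ n) y
      in cd_sub (cd_mul n a c) (cd_mul n d (cd_conj n b))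
         @ cd_add (cd_mul n (cd_conj n a) d) (cd_mul n c b))"

definition cd_zero :: "nat \<Rightarrow> real list" where
  "cd_zero n = replicate (2 ^ n) 0"

definition cd_one :: "nat \<Rightarrow> real list" where
  "cd_one n = 1 # replicate (2 ^ n - 1) 0"

definition von_neumann_finite :: "'a set \<Rightarrow> ('a \<Rightarrow> 'a \<Rightarrow> 'a) \<Rightarrow> 'a \<Rightarrow> bool" where
  "von_neumann_finite A mul one \<longleftrightarrow>
     (\<forall>a\<in>A. \<forall>b\<in>A. mul a b = one \<longrightarrow> mul b a = one)"

definition reversible :: "'a set \<Rightarrow> ('a \<Rightarrow> 'a \<Rightarrow> 'a) \<Rightarrow> 'a \<Rightarrow> bool" where
  "reversible A mul zero \<longleftrightarrow>
     (\<forall>a\<in>A. \<forall>b\<in>A. mul a b = zero \<longrightarrow> mul b a = zero)"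

end

theory Submission
  imports Defs
begin

text \<open>Identify \<open>A\<^sub>n\<close> with \<open>\<real>\<^bsup>2\<^sup>n\<^esup>\<close>, with Euclidean inner product \<open>\<langle>x, y\<rangle>\<close>, and let \<open>Re x\<close> be the
first coordinate. Conjugation is an isometric anti-automorphism with \<open>x\<^sup>* = 2 Re x - x\<close>, and
multiplication satisfies the adjoint relations \<open>\<langle>xy, z\<rangle> = \<langle>y, x\<^sup>*z\<rangle> = \<langle>x, zy\<^sup>*\<rangle>\<close>. These give
\<open>Re (xy) = 2 Re x Re y - \<langle>x, y\<rangle>\<close> and \<open>|x\<^sup>*y\<^sup>*| = |xy|\<close>, hence \<open>Re (yx) = Re (xy)\<close> and
\<open>|yx| = |(yx)\<^sup>*| = |xy|\<close>, although the norm is not multiplicative for \<open>n \<ge> 4\<close>. So \<open>xy = 0\<close>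
forces \<open>yx = 0\<close>, and \<open>xy = 1\<close> forces \<open>Re (yx) = 1 = |yx|\<close>, which leaves only \<open>yx = 1\<close>.\<close>

definition lincomb :: "real \<Rightarrow> real list \<Rightarrow> real \<Rightarrow> real list \<Rightarrow> real list" where
  "lincomb r x s y = map2 (\<lambda>p q. r * p + s * q) x y"

definition inner_list :: "real list \<Rightarrow> real list \<Rightarrow> real" where
  "inner_list x y = sum_list (map2 (*) x y)"

subsection \<open>Linear combinations and the inner product of real lists\<close>

lemma cd_add_eq_lincomb: "cd_add x y = lincomb 1 x 1 y"
  by (simp add: cd_add_def lincomb_def)

lemma cd_sub_eq_lincomb: "cd_sub x y = lincomb 1 x (-1) y"
  by (simp add: cd_sub_def lincomb_def)

lemma map_uminus_eq_lincomb: "map uminus x = lincomb (-1) x 0 x"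
  by (simp add: lincomb_def zip_same_conv_map comp_def)

lemma length_lincomb [simp]: "length (lincomb r x s y) = min (length x) (length y)"
  by (simp add: lincomb_def)

lemma nth_lincomb [simp]:
  "i < length x \<Longrightarrow> i < length y \<Longrightarrow> lincomb r x s y ! i = r * x ! i + s * y ! i"
  by (simp add: lincomb_def)

lemma lincomb_append:
  "length a = length c \<Longrightarrow> lincomb r (a @ b) s (c @ d) = lincomb r a s c @ lincomb r b s d"
  by (simp add: lincomb_def)

lemma lincomb_lincomb:
  "length x = m \<Longrightarrow> length y = m \<Longrightarrow> length u = m \<Longrightarrow> length v = m \<Longrightarrow>
   lincomb p (lincomb r x s y) q (lincomb r u s v) = lincomb r (lincomb p x q u) s (lincomb p y q v)"
  by (intro nth_equalityI) (auto simp: algebra_simps)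

lemma lincomb_zero_zero: "length x = m \<Longrightarrow> lincomb 0 x 0 x = replicate m 0"
  by (intro nth_equalityI) auto

lemma lincomb_replicate_zero_right [simp]: "length x = m \<Longrightarrow> lincomb 1 x s (replicate m 0) = x"
  by (intro nth_equalityI) auto

lemma lincomb_replicate_zero_left [simp]: "length x = m \<Longrightarrow> lincomb r (replicate m 0) 1 x = x"
  by (intro nth_equalityI) auto

lemma inner_list_Nil [simp]: "inner_list [] y = 0"
  by (simp add: inner_list_def)

lemma inner_list_Cons [simp]: "inner_list (a # x) (b # y) = a * b + inner_list x y"
  by (simp add: inner_list_def)

lemma inner_list_conv_sum:
  "length x = length y \<Longrightarrow> inner_list x y = (\<Sum>i<length x. x ! i * y ! i)"
  by (simp add: inner_list_def sum_list_sum_nth atLeast0LessThan)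

lemma inner_list_append:
  "length a = length c \<Longrightarrow> inner_list (a @ b) (c @ d) = inner_list a c + inner_list b d"
  by (simp add: inner_list_def)

lemma inner_list_commute: "inner_list x y = inner_list y x"
  unfolding inner_list_def
  by (induction x arbitrary: y) (auto simp: zip_Cons1 split: list.splits)

lemma inner_list_lincomb_left:
  "length x = length z \<Longrightarrow> length y = length z \<Longrightarrow>
   inner_list (lincomb r x s y) z = r * inner_list x z + s * inner_list y z"
  by (simp add: inner_list_conv_sum sum_distrib_left sum.distrib algebra_simps)

lemma inner_list_lincomb_right:
  "length x = length z \<Longrightarrow> length y = length z \<Longrightarrow>
   inner_list z (lincomb r x s y) = r * inner_list z x + s * inner_list z y"
  by (simp add: inner_list_commute[of z] inner_list_lincomb_left)

lemma inner_list_map_uminus [simp]: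
  "length x = length y \<Longrightarrow> inner_list (map uminus x) (map uminus y) = inner_list x y"
  by (simp add: inner_list_conv_sum)

lemma inner_list_replicate_zero [simp]: "length y = m \<Longrightarrow> inner_list (replicate m 0) y = 0"
  by (simp add: inner_list_conv_sum)

lemma inner_list_self_eq_zero: "inner_list x x = 0 \<Longrightarrow> x = replicate (length x) 0"
proof (induction x)
  case (Cons a x)
  have nonneg: "inner_list y y \<ge> 0" for y by (induction y) auto
  have "a * a + inner_list x x = 0" using Cons.prems by simp
  then have "a * a = 0" and "inner_list x x = 0"
    using nonneg[of x] zero_le_square[of a] by linarith+
  then show ?case using Cons.IH by simp
qed simp

subsection \<open>Elementary algebra of \<open>A\<^sub>n\<close>\<close>

lemma cd_halves:
  assumes "length x = 2 ^ Suc n"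
  obtains a b where "x = a @ b" "length a = 2 ^ n" "length b = 2 ^ n"
  using assms by (intro that[of "take (2 ^ n) x" "drop (2 ^ n) x"]) auto

lemma cd_mul_append:
  "length a = 2 ^ n \<Longrightarrow> length c = 2 ^ n \<Longrightarrow>
   cd_mul (Suc n) (a @ b) (c @ d) =
     cd_sub (cd_mul n a c) (cd_mul n d (cd_conj n b)) @ cd_add (cd_mul n (cd_conj n a) d) (cd_mul n c b)"
  by (simp add: Let_def)

lemma length_cd_conj [simp]: "length (cd_conj n x) = length x"
  by (induction n arbitrary: x) auto

lemma length_cd_mul [simp]: "length x = 2 ^ n \<Longrightarrow> length y = 2 ^ n \<Longrightarrow> length (cd_mul n x y) = 2 ^ n"
proof (induction n arbitrary: x y)
  case (Suc n)
  obtain a b where x: "x = a @ b" "length a = 2 ^ n" "length b = 2 ^ n"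
    by (rule cd_halves[OF Suc.prems(1)])
  obtain c d where y: "y = c @ d" "length c = 2 ^ n" "length d = 2 ^ n"
    by (rule cd_halves[OF Suc.prems(2)])
  show ?case using x y by (simp add: cd_mul_append Suc.IH cd_add_eq_lincomb cd_sub_eq_lincomb)
qed simp

lemma length_cd_zero [simp]: "length (cd_zero n) = 2 ^ n"
  by (simp add: cd_zero_def)

lemma length_cd_one [simp]: "length (cd_one n) = 2 ^ n"
  by (simp add: cd_one_def)

lemma cd_one_Suc: "cd_one (Suc n) = cd_one n @ cd_zero n"
proof -
  have length_eq: "(2::nat) ^ Suc n - 1 = (2 ^ n - 1) + 2 ^ n" by simp
  show ?thesis unfolding cd_one_def cd_zero_def length_eq replicate_add by simp
qed

lemma cd_conj_conj [simp]: "length x = 2 ^ n \<Longrightarrow> cd_conj n (cd_conj n x) = x"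
proof (induction n arbitrary: x)
  case (Suc n)
  obtain a b where "x = a @ b" "length a = 2 ^ n" "length b = 2 ^ n"
    by (rule cd_halves[OF Suc.prems(1)])
  then show ?case by (simp add: Suc.IH comp_def)
qed simp

lemma cd_conj_lincomb:
  "length x = 2 ^ n \<Longrightarrow> length y = 2 ^ n \<Longrightarrow>
   cd_conj n (lincomb r x s y) = lincomb r (cd_conj n x) s (cd_conj n y)"
proof (induction n arbitrary: x y)
  case (Suc n)
  obtain a b where x: "x = a @ b" "length a = 2 ^ n" "length b = 2 ^ n"
    by (rule cd_halves[OF Suc.prems(1)])
  obtain c d where y: "y = c @ d" "length c = 2 ^ n" "length d = 2 ^ n"
    by (rule cd_halves[OF Suc.prems(2)])
  have "map uminus (lincomb r b s d) = lincomb r (map uminus b) s (map uminus d)"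
    using x y by (intro nth_equalityI) auto
  then show ?case using x y by (simp add: lincomb_append Suc.IH)
qed simp

lemma cd_mul_lincomb_left:
  "length x = 2 ^ n \<Longrightarrow> length y = 2 ^ n \<Longrightarrow> length z = 2 ^ n \<Longrightarrow>
   cd_mul n (lincomb r x s y) z = lincomb r (cd_mul n x z) s (cd_mul n y z)"
  and cd_mul_lincomb_right:
  "length x = 2 ^ n \<Longrightarrow> length y = 2 ^ n \<Longrightarrow> length z = 2 ^ n \<Longrightarrow>
   cd_mul n z (lincomb r x s y) = lincomb r (cd_mul n z x) s (cd_mul n z y)"
proof (induction n arbitrary: x y z)
  case 0
  { case 1 then show ?case by (cases x; cases y; cases z) (auto simp: lincomb_def algebra_simps) }
  { case 2 then show ?case by (cases x; cases y; cases z) (auto simp: lincomb_def algebra_simps) }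
next
  case (Suc n)
  { case 1
    obtain a b where "x = a @ b" "length a = 2 ^ n" "length b = 2 ^ n" by (rule cd_halves[OF 1(1)])
    moreover obtain c d where "y = c @ d" "length c = 2 ^ n" "length d = 2 ^ n" by (rule cd_halves[OF 1(2)])
    moreover obtain e f where "z = e @ f" "length e = 2 ^ n" "length f = 2 ^ n" by (rule cd_halves[OF 1(3)])
    ultimately show ?case
      by (simp add: lincomb_append cd_mul_append Suc.IH cd_conj_lincomb
          cd_add_eq_lincomb cd_sub_eq_lincomb lincomb_lincomb) }
  { case 2
    obtain a b where "x = a @ b" "length a = 2 ^ n" "length b = 2 ^ n" by (rule cd_halves[OF 2(1)])
    moreover obtain c d where "y = c @ d" "length c = 2 ^ n" "length d = 2 ^ n" by (rule cd_halves[OF 2(2)])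
    moreover obtain e f where "z = e @ f" "length e = 2 ^ n" "length f = 2 ^ n" by (rule cd_halves[OF 2(3)])
    ultimately show ?case
      by (simp add: lincomb_append cd_mul_append Suc.IH cd_conj_lincomb
          cd_add_eq_lincomb cd_sub_eq_lincomb lincomb_lincomb) }
qed

lemma cd_mul_zero_right [simp]: "length x = 2 ^ n \<Longrightarrow> cd_mul n x (cd_zero n) = cd_zero n"
  using cd_mul_lincomb_right[of x n x x 0 0]
  by (simp add: lincomb_zero_zero cd_zero_def)

lemma cd_mul_zero_left [simp]: "length x = 2 ^ n \<Longrightarrow> cd_mul n (cd_zero n) x = cd_zero n"
  using cd_mul_lincomb_left[of x n x x 0 0]
  by (simp add: lincomb_zero_zero cd_zero_def)

lemma cd_conj_zero [simp]: "cd_conj n (cd_zero n) = cd_zero n"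
  using cd_conj_lincomb[of "cd_zero n" n "cd_zero n" 0 0]
  by (simp add: lincomb_zero_zero cd_zero_def)

lemma cd_conj_one [simp]: "cd_conj n (cd_one n) = cd_one n"
proof (induction n)
  case (Suc n)
  have "map uminus (cd_zero n) = cd_zero n" by (simp add: cd_zero_def)
  with Suc.IH show ?case by (simp add: cd_one_Suc)
qed (simp add: cd_one_def)

lemma cd_mul_one_left [simp]: "length x = 2 ^ n \<Longrightarrow> cd_mul n (cd_one n) x = x"
  and cd_mul_one_right [simp]: "length x = 2 ^ n \<Longrightarrow> cd_mul n x (cd_one n) = x"
proof (induction n arbitrary: x)
  case 0
  { case 1 then show ?case by (cases x) (auto simp: cd_one_def) }
  { case 2 then show ?case by (cases x) (auto simp: cd_one_def) }
next
  case (Suc n)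
  { case 1
    obtain a b where "x = a @ b" "length a = 2 ^ n" "length b = 2 ^ n" by (rule cd_halves[OF 1])
    then show ?case
      by (simp add: cd_one_Suc cd_mul_append Suc.IH cd_add_eq_lincomb cd_sub_eq_lincomb)
         (simp add: cd_zero_def) }
  { case 2
    obtain a b where "x = a @ b" "length a = 2 ^ n" "length b = 2 ^ n" by (rule cd_halves[OF 2])
    then show ?case
      by (simp add: cd_one_Suc cd_mul_append Suc.IH cd_add_eq_lincomb cd_sub_eq_lincomb)
         (simp add: cd_zero_def) }
qed

lemma cd_conj_mul:
  "length x = 2 ^ n \<Longrightarrow> length y = 2 ^ n \<Longrightarrow>
   cd_conj n (cd_mul n x y) = cd_mul n (cd_conj n y) (cd_conj n x)"
proof (induction n arbitrary: x y)
  case 0 then show ?case by (cases x; cases y) auto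
next
  case (Suc n)
  obtain a b where x: "x = a @ b" "length a = 2 ^ n" "length b = 2 ^ n"
    by (rule cd_halves[OF Suc.prems(1)])
  obtain c d where y: "y = c @ d" "length c = 2 ^ n" "length d = 2 ^ n"
    by (rule cd_halves[OF Suc.prems(2)])
  show ?case using x y
    by (simp add: cd_mul_append Suc.IH cd_add_eq_lincomb cd_sub_eq_lincomb cd_conj_lincomb
        map_uminus_eq_lincomb cd_mul_lincomb_left cd_mul_lincomb_right Let_def)
       (intro conjI nth_equalityI; simp)
qed

lemma cd_conj_eq_lincomb: "length x = 2 ^ n \<Longrightarrow> cd_conj n x = lincomb (2 * hd x) (cd_one n) (-1) x"
proof (induction n arbitrary: x)
  case 0 then show ?case by (cases x) (auto simp: cd_one_def lincomb_def)
next
  case (Suc n)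
  obtain a b where x: "x = a @ b" "length a = 2 ^ n" "length b = 2 ^ n"
    by (rule cd_halves[OF Suc.prems(1)])
  then have "a \<noteq> []" by auto
  with x show ?case
    by (simp add: Suc.IH cd_one_Suc lincomb_append) (intro nth_equalityI; simp add: cd_zero_def)
qed

subsection \<open>The inner product on \<open>A\<^sub>n\<close>\<close>

lemma inner_list_cd_conj:
  "length x = 2 ^ n \<Longrightarrow> length y = 2 ^ n \<Longrightarrow> inner_list (cd_conj n x) (cd_conj n y) = inner_list x y"
proof (induction n arbitrary: x y)
  case (Suc n)
  obtain a b where x: "x = a @ b" "length a = 2 ^ n" "length b = 2 ^ n"
    by (rule cd_halves[OF Suc.prems(1)])
  obtain c d where y: "y = c @ d" "length c = 2 ^ n" "length d = 2 ^ n"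
    by (rule cd_halves[OF Suc.prems(2)])
  show ?case using x y by (simp add: inner_list_append Suc.IH)
qed simp

lemma inner_list_cd_one: "length x = 2 ^ n \<Longrightarrow> inner_list (cd_one n) x = hd x"
proof (induction n arbitrary: x)
  case 0 then show ?case by (cases x) (auto simp: cd_one_def)
next
  case (Suc n)
  obtain a b where x: "x = a @ b" "length a = 2 ^ n" "length b = 2 ^ n"
    by (rule cd_halves[OF Suc.prems(1)])
  then have "a \<noteq> []" by auto
  with x show ?case by (simp add: cd_one_Suc inner_list_append Suc.IH cd_zero_def)
qed

lemma inner_list_cd_mul_adjoint:
  "length x = 2 ^ n \<Longrightarrow> length y = 2 ^ n \<Longrightarrow> length z = 2 ^ n \<Longrightarrow>
   inner_list (cd_mul n x y) z = inner_list y (cd_mul n (cd_conj n x) z) \<and>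
   inner_list (cd_mul n x y) z = inner_list x (cd_mul n z (cd_conj n y))"
proof (induction n arbitrary: x y z)
  case 0 then show ?case by (cases x; cases y; cases z) auto
next
  case (Suc n)
  obtain a b where x: "x = a @ b" "length a = 2 ^ n" "length b = 2 ^ n"
    by (rule cd_halves[OF Suc.prems(1)])
  obtain c d where y: "y = c @ d" "length c = 2 ^ n" "length d = 2 ^ n"
    by (rule cd_halves[OF Suc.prems(2)])
  obtain e f where z: "z = e @ f" "length e = 2 ^ n" "length f = 2 ^ n"
    by (rule cd_halves[OF Suc.prems(3)])
  note adj_left = conjunct1[OF Suc.IH] and adj_right = conjunct2[OF Suc.IH]
  let ?m = "cd_mul n" and ?c = "cd_conj n" and ?ip = inner_list
  have lhs: "?ip (cd_mul (Suc n) x y) z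
      = ?ip (?m a c) e - ?ip (?m d (?c b)) e + ?ip (?m (?c a) d) f + ?ip (?m c b) f"
    using x y z
    by (simp add: cd_mul_append cd_add_eq_lincomb cd_sub_eq_lincomb inner_list_append
        inner_list_lincomb_left)
  have rhs_left: "?ip y (cd_mul (Suc n) (cd_conj (Suc n) x) z)
      = ?ip c (?m (?c a) e) + ?ip c (?m f (?c b)) + ?ip d (?m a f) - ?ip d (?m e b)"
    using x y z
    by (simp add: cd_mul_append cd_add_eq_lincomb cd_sub_eq_lincomb inner_list_append
        inner_list_lincomb_right map_uminus_eq_lincomb cd_conj_lincomb cd_mul_lincomb_left
        cd_mul_lincomb_right Let_def)
  have rhs_right: "?ip x (cd_mul (Suc n) z (cd_conj (Suc n) y))
      = ?ip a (?m e (?c c)) + ?ip a (?m d (?c f)) - ?ip b (?m (?c e) d) + ?ip b (?m (?c c) f)"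
    using x y z
    by (simp add: cd_mul_append cd_add_eq_lincomb cd_sub_eq_lincomb inner_list_append
        inner_list_lincomb_right map_uminus_eq_lincomb cd_conj_lincomb cd_mul_lincomb_left
        cd_mul_lincomb_right Let_def)
  have "?ip (?m a c) e = ?ip c (?m (?c a) e)" "?ip (?m a c) e = ?ip a (?m e (?c c))"
    using adj_left[of a c e] adj_right[of a c e] x y z by auto
  moreover have "?ip (?m (?c a) d) f = ?ip d (?m a f)"
    using adj_left[of "?c a" d f] x y z by auto
  moreover have "?ip (?m c b) f = ?ip c (?m f (?c b))" "?ip (?m c b) f = ?ip b (?m (?c c) f)"
    using adj_left[of c b f] adj_right[of c b f] x y z by auto
  moreover have "?ip (?m d (?c b)) e = ?ip d (?m e b)"
    using adj_right[of d "?c b" e] x y z by auto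
  moreover have "?ip b (?m (?c e) d) = ?ip d (?m e b)"
    using adj_left[of "?c e" d b] x y z by (auto simp: inner_list_commute)
  moreover have "?ip a (?m d (?c f)) = ?ip d (?m a f)"
    using adj_right[of d "?c f" a] x y z by (auto simp: inner_list_commute)
  ultimately show ?case using lhs rhs_left rhs_right by simp
qed

lemmas inner_list_cd_mul_left = inner_list_cd_mul_adjoint[THEN conjunct1]
lemmas inner_list_cd_mul_right = inner_list_cd_mul_adjoint[THEN conjunct2]

lemma cd_mul_conj_self:
  "length x = 2 ^ n \<Longrightarrow> cd_mul n x (cd_conj n x) = lincomb (inner_list x x) (cd_one n) 0 (cd_one n)"
proof (induction n arbitrary: x)
  case 0 then show ?case by (cases x) (auto simp: cd_one_def lincomb_def)
next
  case (Suc n)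
  obtain a b where x: "x = a @ b" "length a = 2 ^ n" "length b = 2 ^ n"
    by (rule cd_halves[OF Suc.prems(1)])
  have "cd_mul n (map uminus b) (cd_conj n b)
      = lincomb (-1) (cd_mul n b (cd_conj n b)) 0 (cd_mul n b (cd_conj n b))"
    and "cd_mul n (cd_conj n a) (map uminus b)
      = lincomb (-1) (cd_mul n (cd_conj n a) b) 0 (cd_mul n (cd_conj n a) b)"
    using x by (simp_all add: map_uminus_eq_lincomb cd_mul_lincomb_left cd_mul_lincomb_right)
  with x show ?case
    by (simp add: cd_mul_append Suc.IH cd_one_Suc lincomb_append cd_add_eq_lincomb
        cd_sub_eq_lincomb inner_list_append Let_def)
       (intro conjI nth_equalityI; simp add: cd_zero_def algebra_simps)
qed

lemma inner_list_cd_mul_self_right: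
  assumes "length x = 2 ^ n" "length y = 2 ^ n"
  shows "inner_list (cd_mul n x y) y = inner_list y y * hd x"
  using assms
  by (simp add: inner_list_cd_mul_right cd_mul_conj_self inner_list_lincomb_left
      inner_list_commute[of x] inner_list_cd_one)

lemma inner_list_cd_mul_self_left:
  assumes "length x = 2 ^ n" "length y = 2 ^ n"
  shows "inner_list (cd_mul n x y) x = inner_list x x * hd y"
proof -
  have "cd_mul n (cd_conj n x) x = lincomb (inner_list x x) (cd_one n) 0 (cd_one n)"
    using cd_mul_conj_self[of "cd_conj n x" n] assms by (simp add: inner_list_cd_conj)
  with assms show ?thesis
    by (simp add: inner_list_cd_mul_left inner_list_lincomb_left inner_list_commute[of y]
        inner_list_cd_one)
qed

lemma hd_cd_mul:
  assumes "length x = 2 ^ n" "length y = 2 ^ n"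
  shows "hd (cd_mul n x y) = 2 * hd x * hd y - inner_list x y"
proof -
  have "hd (cd_mul n x y) = inner_list (cd_mul n x y) (cd_one n)"
    using assms by (simp add: inner_list_commute[of _ "cd_one n"] inner_list_cd_one)
  also have "\<dots> = inner_list x (cd_conj n y)"
    using assms by (simp add: inner_list_cd_mul_right)
  also have "\<dots> = 2 * hd x * hd y - inner_list x y"
    using assms by (simp add: cd_conj_eq_lincomb[of y] inner_list_lincomb_right
        inner_list_commute[of x "cd_one n"] inner_list_cd_one)
  finally show ?thesis .
qed

text \<open>With \<open>s = Re x\<close>, \<open>t = Re y\<close> and \<open>w = xy\<close> we have \<open>x\<^sup>*y\<^sup>* = 2s y\<^sup>* - (2t x - w)\<close>; in the
expansion of its square norm the cross terms cancel because \<open>\<langle>w, y\<rangle> = |y|\<^sup>2 s\<close>,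
\<open>\<langle>w, x\<rangle> = |x|\<^sup>2 t\<close> and \<open>Re w = 2st - \<langle>x, y\<rangle>\<close>.\<close>

lemma inner_list_cd_mul_conj_conj:
  assumes x: "length x = 2 ^ n" and y: "length y = 2 ^ n"
  shows "inner_list (cd_mul n (cd_conj n x) (cd_conj n y)) (cd_mul n (cd_conj n x) (cd_conj n y))
       = inner_list (cd_mul n x y) (cd_mul n x y)"
proof -
  define e s t w where "e = cd_one n" and "s = hd x" and "t = hd y" and "w = cd_mul n x y"
  have len: "length e = 2 ^ n" "length w = 2 ^ n" "length (cd_conj n y) = 2 ^ n"
    using x y by (simp_all add: e_def w_def)
  have conj_y: "cd_conj n y = lincomb (2 * t) e (-1) y"
    using y by (simp add: cd_conj_eq_lincomb t_def e_def)
  have "cd_mul n x (cd_conj n y) = lincomb (2 * t) x (-1) w"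
    using x y len unfolding conj_y by (simp add: cd_mul_lincomb_right e_def w_def)
  then have product: "cd_mul n (cd_conj n x) (cd_conj n y)
      = lincomb (2 * s) (cd_conj n y) (-1) (lincomb (2 * t) x (-1) w)"
    using x y len
    by (simp add: cd_conj_eq_lincomb[of x] cd_mul_lincomb_left s_def e_def)
  have ee: "inner_list e e = 1"
    using inner_list_cd_one[of e n] len by (simp add: e_def cd_one_def)
  have ex: "inner_list e x = s" "inner_list x e = s"
    and ey: "inner_list e y = t" "inner_list y e = t"
    and ew: "inner_list e w = 2 * s * t - inner_list x y" "inner_list w e = 2 * s * t - inner_list x y"
    using x y len inner_list_cd_one[of _ n] hd_cd_mul[OF x y]
    by (auto simp: e_def s_def t_def w_def inner_list_commute[of _ "cd_one n"])
  have wy: "inner_list w y = inner_list y y * s" "inner_list y w = inner_list y y * s"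
    using inner_list_cd_mul_self_right[OF x y] by (simp_all add: w_def s_def inner_list_commute)
  have wx: "inner_list w x = inner_list x x * t" "inner_list x w = inner_list x x * t"
    using inner_list_cd_mul_self_left[OF x y] by (simp_all add: w_def t_def inner_list_commute)
  have yx: "inner_list y x = inner_list x y"
    by (rule inner_list_commute)
  show ?thesis
    unfolding product unfolding conj_y w_def[symmetric]
    by (simp add: inner_list_lincomb_left inner_list_lincomb_right x y len ee ex ey ew wy wx yx
        algebra_simps)
qed

lemma inner_list_cd_mul_commute:
  assumes "length x = 2 ^ n" "length y = 2 ^ n"
  shows "inner_list (cd_mul n y x) (cd_mul n y x) = inner_list (cd_mul n x y) (cd_mul n x y)"
  using assms inner_list_cd_conj[of "cd_mul n y x" n "cd_mul n y x"]
  by (simp add: cd_conj_mul inner_list_cd_mul_conj_conj)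

lemma hd_cd_mul_commute: "length x = 2 ^ n \<Longrightarrow> length y = 2 ^ n \<Longrightarrow> hd (cd_mul n y x) = hd (cd_mul n x y)"
  by (simp add: hd_cd_mul inner_list_commute)

lemma cd_zero_eqI: "length z = 2 ^ n \<Longrightarrow> inner_list z z = 0 \<Longrightarrow> z = cd_zero n"
  using inner_list_self_eq_zero by (fastforce simp: cd_zero_def)

lemma cd_one_eqI:
  assumes "length z = 2 ^ n" "hd z = 1" "inner_list z z = 1"
  shows "z = cd_one n"
proof -
  obtain zs where z: "z = 1 # zs"
    using assms(1,2) by (cases z) auto
  with assms(3) have "inner_list zs zs = 0" by simp
  then have "zs = replicate (length zs) 0" by (rule inner_list_self_eq_zero)
  moreover have "length zs = 2 ^ n - 1" using z assms(1) by simp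
  ultimately show ?thesis using z unfolding cd_one_def by metis
qed

theorem corollary4p5:
  fixes n :: nat
  shows "von_neumann_finite (cd_carrier n) (cd_mul n) (cd_one n)
       \<and> reversible (cd_carrier n) (cd_mul n) (cd_zero n)"
proof
  have one: "hd (cd_one n) = 1" "inner_list (cd_one n) (cd_one n) = 1"
    using inner_list_cd_one[of "cd_one n" n] by (simp_all add: cd_one_def)
  show "von_neumann_finite (cd_carrier n) (cd_mul n) (cd_one n)"
    unfolding von_neumann_finite_def cd_carrier_def
  proof (intro ballI impI)
    fix a b assume "a \<in> {x. length x = 2 ^ n}" "b \<in> {x. length x = 2 ^ n}" "cd_mul n a b = cd_one n"
    then show "cd_mul n b a = cd_one n"
      using one by (intro cd_one_eqI) (simp_all add: hd_cd_mul_commute inner_list_cd_mul_commute)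
  qed
  show "reversible (cd_carrier n) (cd_mul n) (cd_zero n)"
    unfolding reversible_def cd_carrier_def
  proof (intro ballI impI)
    fix a b assume "a \<in> {x. length x = 2 ^ n}" "b \<in> {x. length x = 2 ^ n}" "cd_mul n a b = cd_zero n"
    then show "cd_mul n b a = cd_zero n"
      by (intro cd_zero_eqI) (simp_all add: inner_list_cd_mul_commute cd_zero_def)
  qed
qed

end
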